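(* Let $A$ be a unital simple $C^*$-algebra and $\alpha$ a flow of $A$. Let $(u_\infty,u_1,u_2,\ldots)$ be a sequence of $\alpha$-cocycles such that $\lim_{n\to\infty}u_{n,t}=u_{\infty,t}$ uniformly in $t$ on every compact subset of $\mathbb{R}$. Then for any $\epsilon>0$ there exists a sequence $(w_\infty,w_1,w_2,\ldots)$ of invertible elements of $A$ such that $\lim_{n\to\infty}w_n=w_\infty$, $\|w_n-1\|<\epsilon$, and for each $m\in\{\infty,1,2,\ldots\}$ the function $t\mapsto v_{m,t}:=w_m^{-1}u_{m,t}\alpha_t(w_m)$ extends to an entire function $z\mapsto v_{m,z}$ on $\mathbb{C}$, and $\lim_{n\to\infty}v_{n,z}=v_{\infty,z}$ for every $z\in\mathbb{C}$.
   Context: A flow of $A$ is a strongly continuous one-parameter automorphism group $(\alpha_t)_{t\in\mathbb{R}}$ of $A$. An $\alpha$-cocycle is a norm-continuous map $t\mapsto u_t$ from $\mathbb{R}$ into the unitary group of $A$ satisfying $u_s\alpha_s(u_t)=u_{s+t}$ for all $s,t\in\mathbb{R}$. *)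

theory Defs
  imports "HOL-Analysis.Analysis"
begin

text \<open>A unital C*-algebra is modelled on a type 'a carrying a real Banach algebra
structure with unit (norm 1 = 1), together with an explicit complex scalar
multiplication sc (extending scaleR) and an involution st satisfying the C*-identity.\<close>

definition cstar_algebra ::
  "(complex \<Rightarrow> 'a::{real_normed_algebra_1,banach} \<Rightarrow> 'a) \<Rightarrow> ('a \<Rightarrow> 'a) \<Rightarrow> bool" where
  "cstar_algebra sc st \<longleftrightarrow>
     (\<forall>r x. sc (complex_of_real r) x = scaleR r x) \<and>
     (\<forall>a b x. sc (a + b) x = sc a x + sc b x) \<and>
     (\<forall>a x y. sc a (x + y) = sc a x + sc a y) \<and>
     (\<forall>a b x. sc a (sc b x) = sc (a * b) x) \<and>
     (\<forall>a x y. sc a (x * y) = sc a x * y \<and> sc a (x * y) = x * sc a y) \<and>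
     (\<forall>a x. norm (sc a x) = cmod a * norm x) \<and>
     (\<forall>x. st (st x) = x) \<and>
     (\<forall>x y. st (x + y) = st x + st y) \<and>
     (\<forall>a x. st (sc a x) = sc (cnj a) (st x)) \<and>
     (\<forall>x y. st (x * y) = st y * st x) \<and>
     (\<forall>x. norm (st x * x) = (norm x)\<^sup>2)"

definition closed_ideal ::
  "(complex \<Rightarrow> 'a::{real_normed_algebra_1,banach} \<Rightarrow> 'a) \<Rightarrow> 'a set \<Rightarrow> bool" where
  "closed_ideal sc I \<longleftrightarrow> closed I \<and> 0 \<in> I \<and>
     (\<forall>x\<in>I. \<forall>y\<in>I. x + y \<in> I) \<and>
     (\<forall>a. \<forall>x\<in>I. sc a x \<in> I) \<and>
     (\<forall>x\<in>I. \<forall>y. x * y \<in> I \<and> y * x \<in> I)"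

definition simple_cstar ::
  "(complex \<Rightarrow> 'a::{real_normed_algebra_1,banach} \<Rightarrow> 'a) \<Rightarrow> ('a \<Rightarrow> 'a) \<Rightarrow> bool" where
  "simple_cstar sc st \<longleftrightarrow> cstar_algebra sc st \<and>
     (\<forall>I. closed_ideal sc I \<longrightarrow> I = {0} \<or> I = UNIV)"

definition star_automorphism ::
  "(complex \<Rightarrow> 'a::{real_normed_algebra_1,banach} \<Rightarrow> 'a) \<Rightarrow> ('a \<Rightarrow> 'a) \<Rightarrow> ('a \<Rightarrow> 'a) \<Rightarrow> bool" where
  "star_automorphism sc st f \<longleftrightarrow> bij f \<and>
     (\<forall>x y. f (x + y) = f x + f y) \<and>
     (\<forall>a x. f (sc a x) = sc a (f x)) \<and>
     (\<forall>x y. f (x * y) = f x * f y) \<and>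
     (\<forall>x. f (st x) = st (f x))"

definition flow ::
  "(complex \<Rightarrow> 'a::{real_normed_algebra_1,banach} \<Rightarrow> 'a) \<Rightarrow> ('a \<Rightarrow> 'a) \<Rightarrow> (real \<Rightarrow> 'a \<Rightarrow> 'a) \<Rightarrow> bool" where
  "flow sc st \<alpha> \<longleftrightarrow> (\<forall>t. star_automorphism sc st (\<alpha> t)) \<and>
     \<alpha> 0 = id \<and> (\<forall>s t. \<alpha> (s + t) = \<alpha> s \<circ> \<alpha> t) \<and>
     (\<forall>a. continuous_on UNIV (\<lambda>t. \<alpha> t a))"

definition unitary :: "('a::real_normed_algebra_1 \<Rightarrow> 'a) \<Rightarrow> 'a \<Rightarrow> bool" where
  "unitary st x \<longleftrightarrow> st x * x = 1 \<and> x * st x = 1"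

definition cocycle ::
  "('a::{real_normed_algebra_1,banach} \<Rightarrow> 'a) \<Rightarrow> (real \<Rightarrow> 'a \<Rightarrow> 'a) \<Rightarrow> (real \<Rightarrow> 'a) \<Rightarrow> bool" where
  "cocycle st \<alpha> u \<longleftrightarrow> continuous_on UNIV u \<and> (\<forall>t. unitary st (u t)) \<and>
     (\<forall>s t. u s * \<alpha> s (u t) = u (s + t))"

definition entire_fun ::
  "(complex \<Rightarrow> 'a::{real_normed_algebra_1,banach} \<Rightarrow> 'a) \<Rightarrow> (complex \<Rightarrow> 'a) \<Rightarrow> bool" where
  "entire_fun sc f \<longleftrightarrow>
     (\<forall>z. \<exists>D. ((\<lambda>h. sc (inverse h) (f (z + h) - f z)) \<longlongrightarrow> D) (at 0))"

end

theory Submission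
  imports Defs "HOL-Computational_Algebra.Formal_Power_Series" "HOL-Probability.Distributions"
begin

text \<open>Each cocycle \<open>u\<close> is smoothed by a Gaussian of small width \<open>\<sigma>\<close>,
  \<open>w = \<integral> \<gamma>\<^sub>\<sigma>(s) u\<^sub>s ds\<close>. The cocycle identity gives
  \<open>u\<^sub>t \<alpha>\<^sub>t(w) = \<integral> \<gamma>\<^sub>\<sigma>(s - t) u\<^sub>s ds\<close>, and the right-hand side extends to an
  entire function of \<open>t\<close> because the Gaussian does and stays integrable along horizontal
  lines. Uniform convergence on compacts makes the family of cocycles equicontinuous at \<open>0\<close>,
  so one small \<open>\<sigma>\<close> puts every \<open>w\<^sub>m\<close> close to \<open>1\<close>, where the Neumann series inverts
  it; the same convergence together with the Gaussian tails gives convergence of the smoothed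
  cocycles at every \<open>z\<close>. Moving \<open>\<alpha>\<^sub>t\<close> inside the integral needs \<open>\<alpha>\<^sub>t\<close> to be
  bounded, which holds for every unital *-homomorphism because self-adjoint contractions are
  means of unitaries.\<close>


section \<open>Unital C*-algebras\<close>

locale cstar =
  fixes sc :: "complex \<Rightarrow> 'a::{real_normed_algebra_1,banach} \<Rightarrow> 'a"
    and st :: "'a \<Rightarrow> 'a"
  assumes cstar_algebra: "cstar_algebra sc st"
begin

lemma sc_of_real: "sc (complex_of_real r) x = r *\<^sub>R x"
  and sc_add_left: "sc (a + b) x = sc a x + sc b x"
  and sc_add_right: "sc a (x + y) = sc a x + sc a y"
  and sc_sc: "sc a (sc b x) = sc (a * b) x"
  and sc_mult_left: "sc a (x * y) = sc a x * y"
  and sc_mult_right: "sc a (x * y) = x * sc a y"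
  and norm_sc: "norm (sc a x) = cmod a * norm x"
  and st_st [simp]: "st (st x) = x"
  and st_add: "st (x + y) = st x + st y"
  and st_sc: "st (sc a x) = sc (cnj a) (st x)"
  and st_mult: "st (x * y) = st y * st x"
  and norm_st_mult_self: "norm (st x * x) = (norm x)\<^sup>2"
  using cstar_algebra unfolding cstar_algebra_def by metis+

lemma sc_one [simp]: "sc 1 x = x"
  using sc_of_real[of 1 x] by simp

lemma sc_zero_left [simp]: "sc 0 x = 0"
  using sc_of_real[of 0 x] by simp

lemma sc_minus_left: "sc (- a) x = - sc a x"
  using sc_add_left[of a "-a" x] by (simp add: minus_unique)

lemma sc_minus_right: "sc a (- x) = - sc a x"
  using sc_add_right[of a x "-x"] norm_sc[of a 0] by (simp add: minus_unique)

lemma sc_diff_left: "sc (a - b) x = sc a x - sc b x"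
  using sc_add_left[of a "-b" x] sc_minus_left by simp

lemma sc_diff_right: "sc a (x - y) = sc a x - sc a y"
  using sc_add_right[of a x "-y"] sc_minus_right by simp

lemma sc_scaleR_right: "sc a (r *\<^sub>R x) = r *\<^sub>R sc a x"
  by (metis mult.commute sc_of_real sc_sc)

lemma sc_scaleR_left: "sc (r *\<^sub>R a) x = r *\<^sub>R sc a x"
  by (metis sc_of_real sc_sc scaleR_conv_of_real)

lemma bounded_linear_sc_right: "bounded_linear (sc a)"
  by (rule bounded_linear_intro[where K="cmod a"]) (auto simp: sc_add_right sc_scaleR_right norm_sc)

lemma bounded_bilinear_sc: "bounded_bilinear sc"
  by (rule bounded_bilinear.intro)
    (auto simp: sc_add_left sc_add_right sc_scaleR_left sc_scaleR_right norm_sc intro!: exI[of _ 1])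

lemma st_zero [simp]: "st 0 = 0"
  using st_add[of 0 0] by simp

lemma st_minus: "st (- x) = - st x"
  using st_add[of x "-x"] by (simp add: minus_unique)

lemma st_diff: "st (x - y) = st x - st y"
  using st_add[of x "-y"] st_minus by simp

lemma st_scaleR: "st (r *\<^sub>R x) = r *\<^sub>R st x"
  by (metis complex_cnj_complex_of_real sc_of_real st_sc)

lemma st_one [simp]: "st 1 = 1"
proof -
  have "st 1 = st 1 * st (st 1)" by simp
  also have "\<dots> = st (st 1 * 1)" by (simp only: st_mult)
  also have "\<dots> = 1" by simp
  finally show ?thesis .
qed

lemma norm_st [simp]: "norm (st x) = norm x"
proof -
  have le: "norm y \<le> norm (st y)" for y
  proof (cases "y = 0")
    case False
    have "(norm y)\<^sup>2 \<le> norm (st y) * norm y"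
      using norm_st_mult_self[of y] norm_mult_ineq[of "st y" y] by simp
    with False show ?thesis by (simp add: power2_eq_square)
  qed simp
  show ?thesis using le[of x] le[of "st x"] by simp
qed

lemma bounded_linear_st: "bounded_linear st"
  by (rule bounded_linear_intro[where K=1]) (auto simp: st_add st_scaleR)

lemma st_power: "st (x ^ n) = st x ^ n"
  by (induction n) (auto simp: st_mult power_commutes)

lemma norm_unitary: "unitary st v \<Longrightarrow> norm v = 1"
  using norm_st_mult_self[of v] power2_eq_imp_eq[of "norm v" 1]
  by (simp add: unitary_def)

end

section \<open>Boundedness of unital *-homomorphisms\<close>

definition sqrt_one_minus_coeff :: "nat \<Rightarrow> real" where
  "sqrt_one_minus_coeff k = ((1/2) gchoose k) * (-1) ^ k"

lemma summable_sqrt_one_minus_coeff: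
  assumes "0 \<le> r" "r < 1"
  shows "summable (\<lambda>k. \<bar>sqrt_one_minus_coeff k\<bar> * r ^ k)"
proof -
  define q where "q = (1 + r) / 2"
  have q: "\<bar>q\<bar> < 1" "r < q" using assms by (auto simp: q_def)
  have "summable (\<lambda>k. ((1/2::real) gchoose k) * q ^ k)"
    using gen_binomial_real[OF q(1), of "1/2"] by (simp add: sums_iff)
  from powser_insidea[OF this, of r] q assms
  show ?thesis by (simp add: sqrt_one_minus_coeff_def abs_mult)
qed

lemma sqrt_one_minus_coeff_convolution:
  "(\<Sum>i\<le>k. sqrt_one_minus_coeff i * sqrt_one_minus_coeff (k - i)) =
     (if k = 0 then 1 else if k = 1 then -1 else 0)"
proof -
  have "(\<Sum>i\<le>k. sqrt_one_minus_coeff i * sqrt_one_minus_coeff (k - i)) =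
      (-1) ^ k * (\<Sum>i\<le>k. ((1/2::real) gchoose i) * ((1/2) gchoose (k - i)))"
    unfolding sum_distrib_left
  proof (rule sum.cong[OF refl])
    fix i assume "i \<in> {..k}"
    then have "(-1::real) ^ i * (-1) ^ (k - i) = (-1) ^ k" by (simp flip: power_add)
    then show "sqrt_one_minus_coeff i * sqrt_one_minus_coeff (k - i) =
        (-1) ^ k * (((1/2) gchoose i) * ((1/2) gchoose (k - i)))"
      unfolding sqrt_one_minus_coeff_def by (metis mult.commute mult.left_commute)
  qed
  also have "(\<Sum>i\<le>k. ((1/2::real) gchoose i) * ((1/2) gchoose (k - i))) = (1::real) gchoose k"
    using gbinomial_Vandermonde[of "1/2::real" "1/2" k] by (simp add: atMost_atLeast0)
  also have "(1::real) gchoose k = of_nat (1 choose k)"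
    by (metis binomial_gbinomial of_nat_1)
  finally show ?thesis by (cases k) (auto simp: binomial_eq_0)
qed

context cstar
begin

lemma selfadjoint_sqrt_one_minus_square:
  assumes sa: "st h = h" and hn: "norm h < 1"
  shows "\<exists>S. st S = S \<and> S * S = 1 - h * h \<and> h * S = S * h"
proof -
  define a where "a = h * h"
  define T where "T k = sqrt_one_minus_coeff k *\<^sub>R a ^ k" for k
  have "norm a < 1"
    using norm_mult_ineq[of h h] hn mult_strict_mono[OF hn hn] by (simp add: a_def)
  then have sumT: "summable (\<lambda>k. norm (T k))"
    by (intro summable_comparison_test[OF _ summable_sqrt_one_minus_coeff[of "norm a"]])
      (auto simp: T_def intro!: mult_left_mono norm_power_ineq)
  then have sT: "summable T" by (rule summable_norm_cancel)
  define S where "S = suminf T"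
  have "S * S = (\<Sum>k. \<Sum>i\<le>k. T i * T (k - i))"
    unfolding S_def by (rule Cauchy_product[OF sumT sumT])
  also have "(\<lambda>k. \<Sum>i\<le>k. T i * T (k - i)) =
      (\<lambda>k. (\<Sum>i\<le>k. sqrt_one_minus_coeff i * sqrt_one_minus_coeff (k - i)) *\<^sub>R a ^ k)"
    by (intro ext) (simp add: T_def scaleR_sum_left power_add[symmetric] mult.commute)
  also have "\<dots> = (\<lambda>k. if k = 0 then 1 else if k = 1 then - a else 0)"
    by (intro ext) (simp add: sqrt_one_minus_coeff_convolution)
  also have "suminf \<dots> = 1 - a"
    by (subst suminf_finite[of "{0, 1}"]) auto
  finally have SS: "S * S = 1 - h * h" by (simp add: a_def)
  have "st S = (\<Sum>k. st (T k))"
    unfolding S_def by (rule bounded_linear.suminf[OF bounded_linear_st sT])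
  also have "(\<lambda>k. st (T k)) = T"
    using sa by (auto simp: T_def st_scaleR st_power a_def st_mult)
  finally have stS: "st S = S" by (simp add: S_def)
  have "h * T k = T k * h" for k
    by (simp add: T_def a_def power_commuting_commutes mult.assoc)
  then have "h * S = S * h"
    unfolding S_def using suminf_mult[OF sT, of h] suminf_mult2[OF sT, of h] by simp
  with SS stS show ?thesis by blast
qed

lemma selfadjoint_mean_of_unitary:
  assumes sa: "st h = h" and hn: "norm h < 1"
  obtains U where "unitary st U" "h = (1/2) *\<^sub>R (U + st U)"
proof -
  obtain S where S: "st S = S" "S * S = 1 - h * h" "h * S = S * h"
    using selfadjoint_sqrt_one_minus_square[OF sa hn] by blast
  define U where "U = h + sc \<i> S"
  have stU: "st U = h - sc \<i> S"
    by (simp add: U_def st_add st_sc sa S(1) sc_minus_left)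
  have iS_square: "sc \<i> S * sc \<i> S = - (S * S)"
    by (simp add: sc_mult_left[symmetric] sc_mult_right[symmetric] sc_sc sc_minus_left[of 1, simplified])
  have h_iS: "h * sc \<i> S = sc \<i> S * h"
    by (simp add: sc_mult_left[symmetric] sc_mult_right[symmetric] S(3))
  have "st U * U = h * h + (h * sc \<i> S - sc \<i> S * h) - sc \<i> S * sc \<i> S"
    "U * st U = h * h - (h * sc \<i> S - sc \<i> S * h) - sc \<i> S * sc \<i> S"
    unfolding stU by (simp_all add: U_def algebra_simps)
  then have "unitary st U"
    using iS_square h_iS S(2) by (simp add: unitary_def)
  moreover have "U + st U = 2 *\<^sub>R h"
    unfolding stU by (simp add: U_def scaleR_2)
  ultimately show ?thesis using that by simp
qed

lemma cartesian_decomposition: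
  obtains h1 h2 where "st h1 = h1" "st h2 = h2" "x = h1 + sc \<i> h2"
    "norm h1 \<le> norm x" "norm h2 \<le> norm x"
proof
  define h1 where "h1 = (1/2) *\<^sub>R (x + st x)"
  define h2 where "h2 = sc (- \<i> / 2) (x - st x)"
  show "st h1 = h1" by (simp add: h1_def st_scaleR st_add add.commute)
  have "st h2 = sc (\<i> / 2) (st x - x)" by (simp add: h2_def st_sc st_diff)
  also have "\<dots> = h2"
    by (metis h2_def minus_diff_eq minus_divide_left sc_minus_left sc_minus_right)
  finally show "st h2 = h2" .
  have "sc \<i> h2 = (1/2) *\<^sub>R (x - st x)"
    using sc_of_real[of "1/2"] by (simp add: h2_def sc_sc)
  then have "h1 + sc \<i> h2 = (1/2) *\<^sub>R ((x + st x) + (x - st x))"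
    by (simp only: h1_def scaleR_add_right)
  also have "\<dots> = x"
    by (simp add: scaleR_2[symmetric])
  finally show "x = h1 + sc \<i> h2" ..
  show "norm h1 \<le> norm x"
    using norm_triangle_ineq[of x "st x"] by (simp add: h1_def)
  show "norm h2 \<le> norm x"
    using norm_triangle_ineq4[of x "st x"] by (simp add: h2_def norm_sc norm_divide)
qed

definition unital_star_hom :: "('a \<Rightarrow> 'a) \<Rightarrow> bool" where
  "unital_star_hom \<phi> \<longleftrightarrow> (\<forall>x y. \<phi> (x + y) = \<phi> x + \<phi> y) \<and> (\<forall>a x. \<phi> (sc a x) = sc a (\<phi> x)) \<and>
     (\<forall>x y. \<phi> (x * y) = \<phi> x * \<phi> y) \<and> (\<forall>x. \<phi> (st x) = st (\<phi> x)) \<and> \<phi> 1 = 1"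

lemma unital_star_hom_scaleR: "unital_star_hom \<phi> \<Longrightarrow> \<phi> (r *\<^sub>R x) = r *\<^sub>R \<phi> x"
  by (metis sc_of_real unital_star_hom_def)

lemma unital_star_hom_star_automorphism:
  assumes "star_automorphism sc st f"
  shows "unital_star_hom f"
proof -
  obtain y where y: "f y = 1"
    using assms unfolding star_automorphism_def by (metis bij_pointE)
  have "f 1 = f 1 * f y" using y by simp
  also have "\<dots> = 1"
    using assms y unfolding star_automorphism_def by (metis mult_1_left)
  finally show ?thesis
    using assms unfolding star_automorphism_def unital_star_hom_def by blast
qed

lemma norm_unital_star_hom_selfadjoint_le:
  assumes \<phi>: "unital_star_hom \<phi>" and sa: "st h = h" and hn: "norm h < 1"
  shows "norm (\<phi> h) \<le> 1"
proof -
  obtain U where U: "unitary st U" "h = (1/2) *\<^sub>R (U + st U)"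
    using selfadjoint_mean_of_unitary[OF sa hn] by blast
  have "unitary st (\<phi> U)"
    using \<phi> U(1) unfolding unital_star_hom_def unitary_def by metis
  then have "norm (\<phi> U) = 1" by (rule norm_unitary)
  moreover have "\<phi> h = (1/2) *\<^sub>R (\<phi> U + st (\<phi> U))"
    using \<phi> U(2) by (simp add: unital_star_hom_scaleR[OF \<phi>] unital_star_hom_def)
  ultimately show ?thesis
    using norm_triangle_ineq[of "\<phi> U" "st (\<phi> U)"] by simp
qed

lemma bounded_linear_unital_star_hom:
  assumes \<phi>: "unital_star_hom \<phi>"
  shows "bounded_linear \<phi>"
proof -
  have small: "norm (\<phi> x) \<le> 2" if "norm x < 1" for x
  proof -
    obtain h1 h2 where h: "st h1 = h1" "st h2 = h2" "x = h1 + sc \<i> h2"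
      "norm h1 \<le> norm x" "norm h2 \<le> norm x"
      by (rule cartesian_decomposition)
    have "\<phi> x = \<phi> h1 + sc \<i> (\<phi> h2)"
      using \<phi> h(3) by (simp add: unital_star_hom_def)
    then have "norm (\<phi> x) \<le> norm (\<phi> h1) + norm (\<phi> h2)"
      using norm_triangle_ineq[of "\<phi> h1" "sc \<i> (\<phi> h2)"] by (simp add: norm_sc)
    also have "\<dots> \<le> 1 + 1"
      using h that
      by (intro add_mono norm_unital_star_hom_selfadjoint_le[OF \<phi>]) simp_all
    finally show ?thesis by simp
  qed
  show ?thesis
  proof (rule bounded_linear_intro[where K=4])
    show "\<phi> (x + y) = \<phi> x + \<phi> y" for x y
      using \<phi> by (simp add: unital_star_hom_def)
    show "\<phi> (r *\<^sub>R x) = r *\<^sub>R \<phi> x" for r x by (rule unital_star_hom_scaleR[OF \<phi>])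
    show "norm (\<phi> x) \<le> norm x * 4" for x
    proof (cases "x = 0")
      case True
      then show ?thesis using unital_star_hom_scaleR[OF \<phi>, of 0 x] by simp
    next
      case False
      define y where "y = (1 / (2 * norm x)) *\<^sub>R x"
      have "norm (\<phi> y) \<le> 2" using False by (intro small) (simp add: y_def)
      moreover have "\<phi> x = (2 * norm x) *\<^sub>R \<phi> y" using False by (simp add: y_def unital_star_hom_scaleR[OF \<phi>])
      ultimately show ?thesis
        using mult_left_mono[of "norm (\<phi> y)" 2 "norm x"] by (simp add: mult.commute)
    qed
  qed
qed

end

section \<open>Neumann series\<close>

definition neumann_inverse :: "'a::{real_normed_algebra_1,banach} \<Rightarrow> 'a" where
  "neumann_inverse w = (\<Sum>k. (1 - w) ^ k)"

lemma neumann_inverse: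
  fixes w :: "'a::{real_normed_algebra_1,banach}"
  assumes "norm (1 - w) < 1"
  shows "w * neumann_inverse w = 1" "neumann_inverse w * w = 1"
    "norm (neumann_inverse w) \<le> 1 / (1 - norm (1 - w))"
proof -
  define x where "x = 1 - w"
  have nx: "norm x < 1" using assms by (simp add: x_def)
  have sg: "summable (\<lambda>k. norm x ^ k)" using nx by (simp add: summable_geometric)
  have sn: "summable (\<lambda>k. norm (x ^ k))"
    by (rule summable_comparison_test[OF _ sg]) (auto intro: norm_power_ineq)
  then have s: "summable (\<lambda>k. x ^ k)" by (rule summable_norm_cancel)
  have geom: "(\<Sum>k. x ^ Suc k) = neumann_inverse w - 1"
    using suminf_split_head[OF s] by (simp add: neumann_inverse_def x_def)
  have "x * neumann_inverse w = (\<Sum>k. x ^ Suc k)"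
    unfolding neumann_inverse_def x_def[symmetric] by (simp add: suminf_mult[OF s, symmetric])
  moreover have "w * neumann_inverse w = neumann_inverse w - x * neumann_inverse w"
    by (simp add: x_def left_diff_distrib)
  ultimately show "w * neumann_inverse w = 1"
    using geom by simp
  have "neumann_inverse w * x = (\<Sum>k. x ^ Suc k)"
    unfolding neumann_inverse_def x_def[symmetric]
    by (simp add: suminf_mult2[OF s] power_commutes)
  moreover have "neumann_inverse w * w = neumann_inverse w - neumann_inverse w * x"
    by (simp add: x_def right_diff_distrib)
  ultimately show "neumann_inverse w * w = 1"
    using geom by simp
  have "norm (neumann_inverse w) \<le> (\<Sum>k. norm (x ^ k))"
    unfolding neumann_inverse_def x_def[symmetric] by (rule summable_norm[OF sn])
  also have "\<dots> \<le> (\<Sum>k. norm x ^ k)"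
    by (rule suminf_le[OF _ sn sg]) (simp add: norm_power_ineq)
  also have "\<dots> = 1 / (1 - norm x)"
    using suminf_geometric[of "norm x"] nx by simp
  finally show "norm (neumann_inverse w) \<le> 1 / (1 - norm (1 - w))"
    by (simp add: x_def)
qed

lemma tendsto_neumann_inverse:
  fixes f :: "'b \<Rightarrow> 'a::{real_normed_algebra_1,banach}"
  assumes f: "(f \<longlongrightarrow> w) F" and w: "norm (1 - w) < 1"
  shows "((\<lambda>x. neumann_inverse (f x)) \<longlongrightarrow> neumann_inverse w) F"
proof -
  define r where "r = (1 + norm (1 - w)) / 2"
  have r: "norm (1 - w) < r" "r < 1" using w by (auto simp: r_def)
  have "\<forall>\<^sub>F x in F. dist (f x) w < r - norm (1 - w)"
    using tendstoD[OF f] r by simp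
  then have near: "\<forall>\<^sub>F x in F. norm (1 - f x) < r"
  proof eventually_elim
    case (elim x)
    have "norm (1 - f x) \<le> norm (1 - w) + norm (w - f x)"
      using norm_triangle_ineq[of "1 - w" "w - f x"] by simp
    with elim show ?case by (simp add: dist_norm norm_minus_commute)
  qed
  have "\<forall>\<^sub>F x in F. norm (neumann_inverse (f x) - neumann_inverse w)
      \<le> 1 / (1 - r) * norm (w - f x) * norm (neumann_inverse w)"
    using near
  proof eventually_elim
    case (elim x)
    define a where "a = neumann_inverse (f x)"
    define b where "b = neumann_inverse w"
    have fx: "norm (1 - f x) < 1" using elim r by simp
    have "a * (w - f x) * b = a * (w * b) - (a * f x) * b"
      by (simp add: algebra_simps)
    then have "a - b = a * (w - f x) * b"
      using neumann_inverse[OF fx] neumann_inverse[OF w] by (simp add: a_def b_def)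
    also have "norm \<dots> \<le> norm a * norm (w - f x) * norm b"
      using order_trans[OF norm_mult_ineq mult_right_mono[OF norm_mult_ineq norm_ge_zero]] .
    also have "\<dots> \<le> 1 / (1 - r) * norm (w - f x) * norm b"
    proof (intro mult_right_mono norm_ge_zero)
      have "1 / (1 - norm (1 - f x)) \<le> 1 / (1 - r)"
        using elim r by (intro divide_left_mono) auto
      then show "norm a \<le> 1 / (1 - r)"
        using neumann_inverse(3)[OF fx] by (simp add: a_def)
    qed
    finally show ?case by (simp add: a_def b_def)
  qed
  moreover have "((\<lambda>x. norm (w - f x)) \<longlongrightarrow> 0) F"
    using tendsto_norm_zero[OF LIM_zero[OF f]] by (simp add: norm_minus_commute)
  then have "((\<lambda>x. 1 / (1 - r) * norm (w - f x) * norm (neumann_inverse w)) \<longlongrightarrow> 0) F"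
    by (rule tendsto_mult_left_zero[OF tendsto_mult_right_zero])
  ultimately have "((\<lambda>x. neumann_inverse (f x) - neumann_inverse w) \<longlongrightarrow> 0) F"
    by (rule Lim_null_comparison)
  then show ?thesis by (rule LIM_zero_cancel)
qed


section \<open>The complex Gaussian kernel\<close>

lemma normal_density_has_integral_UNIV:
  assumes "0 < \<sigma>"
  shows "(normal_density \<mu> \<sigma> has_integral 1) UNIV"
  using has_integral_integral_lborel[OF integrable_normal_density[OF assms]]
    integral_normal_density[OF assms] by simp

lemma normal_density_abs_moment_has_integral_UNIV:
  assumes "0 < \<sigma>"
  shows "((\<lambda>s. normal_density \<mu> \<sigma> s * \<bar>s - \<mu>\<bar>) has_integral \<sigma> * sqrt (2 / pi)) UNIV"
  using has_integral_integral_lborel[OF integrable_normal_moment_abs[OF assms, of \<mu> 1]]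
    integral_normal_moment_abs_odd[OF assms, of \<mu> 0] by simp

lemma normal_density_second_moment_integrable_UNIV:
  assumes "0 < \<sigma>"
  shows "(\<lambda>s. normal_density \<mu> \<sigma> s * (s - \<mu>)\<^sup>2) integrable_on UNIV"
  using integrable_on_lborel[OF integrable_normal_moment[OF assms, of \<mu> 2]] by simp

definition gauss :: "real \<Rightarrow> complex \<Rightarrow> complex" where
  "gauss \<sigma> \<zeta> = of_real (1 / sqrt (2 * pi * \<sigma>\<^sup>2)) * exp (- (\<zeta>\<^sup>2) / of_real (2 * \<sigma>\<^sup>2))"

definition gauss' :: "real \<Rightarrow> complex \<Rightarrow> complex" where
  "gauss' \<sigma> \<zeta> = - (\<zeta> / of_real (\<sigma>\<^sup>2)) * gauss \<sigma> \<zeta>"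

definition gauss'' :: "real \<Rightarrow> complex \<Rightarrow> complex" where
  "gauss'' \<sigma> \<zeta> = (\<zeta>\<^sup>2 / (of_real (\<sigma>\<^sup>2))\<^sup>2 - 1 / of_real (\<sigma>\<^sup>2)) * gauss \<sigma> \<zeta>"

lemma gauss_of_real: "gauss \<sigma> (of_real s) = of_real (normal_density 0 \<sigma> s)"
  unfolding gauss_def normal_density_def by (simp flip: exp_of_real add: power2_eq_square)

lemma has_field_derivative_gauss:
  assumes "\<sigma> \<noteq> 0"
  shows "(gauss \<sigma> has_field_derivative gauss' \<sigma> \<zeta>) (at \<zeta>)"
proof -
  have "(gauss \<sigma> has_field_derivative of_real (1 / sqrt (2 * pi * \<sigma>\<^sup>2)) *
     (exp (- (\<zeta>\<^sup>2) / of_real (2 * \<sigma>\<^sup>2)) * (- (2 * \<zeta>) / of_real (2 * \<sigma>\<^sup>2)))) (at \<zeta>)"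
    unfolding gauss_def[abs_def] using assms
    by (auto intro!: derivative_eq_intros simp: power2_eq_square)
  then show ?thesis
    using assms by (simp add: gauss'_def gauss_def field_simps)
qed

lemma has_field_derivative_gauss':
  assumes "\<sigma> \<noteq> 0"
  shows "(gauss' \<sigma> has_field_derivative gauss'' \<sigma> \<zeta>) (at \<zeta>)"
proof -
  define c where "c = complex_of_real (\<sigma>\<^sup>2)"
  have c: "c \<noteq> 0" using assms by (simp add: c_def)
  have "((\<lambda>\<zeta>. - (\<zeta> / c) * gauss \<sigma> \<zeta>) has_field_derivative
      (- (1 / c)) * gauss \<sigma> \<zeta> + gauss' \<sigma> \<zeta> * (- (\<zeta> / c))) (at \<zeta>)"
    using c by (intro DERIV_mult has_field_derivative_gauss[OF assms]) (auto intro!: derivative_eq_intros)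
  moreover have "(- (1 / c)) * gauss \<sigma> \<zeta> + gauss' \<sigma> \<zeta> * (- (\<zeta> / c)) = gauss'' \<sigma> \<zeta>"
    using c by (simp add: gauss'_def gauss''_def c_def field_simps power2_eq_square)
  ultimately show ?thesis by (simp add: gauss'_def[abs_def] c_def)
qed

lemma norm_gauss:
  "cmod (gauss \<sigma> \<zeta>) = 1 / sqrt (2 * pi * \<sigma>\<^sup>2) * exp (((Im \<zeta>)\<^sup>2 - (Re \<zeta>)\<^sup>2) / (2 * \<sigma>\<^sup>2))"
proof -
  have "Re (- (\<zeta>\<^sup>2) / complex_of_real (2 * \<sigma>\<^sup>2)) = ((Im \<zeta>)\<^sup>2 - (Re \<zeta>)\<^sup>2) / (2 * \<sigma>\<^sup>2)"
    by (simp add: Re_divide_of_real Re_power2 diff_divide_distrib)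
  moreover have "cmod (complex_of_real (1 / sqrt (2 * pi * \<sigma>\<^sup>2))) = 1 / sqrt (2 * pi * \<sigma>\<^sup>2)"
    by (simp only: norm_of_real) simp
  ultimately show ?thesis unfolding gauss_def norm_mult norm_exp_eq_Re by simp
qed

lemma norm_gauss_shift:
  "cmod (gauss \<sigma> (of_real s - z)) = exp ((Im z)\<^sup>2 / (2 * \<sigma>\<^sup>2)) * normal_density (Re z) \<sigma> s"
  unfolding norm_gauss normal_density_def
  by (simp add: power2_eq_square exp_add[symmetric] diff_divide_distrib add_divide_distrib algebra_simps)

lemma continuous_on_gauss_shift:
  "0 < \<sigma> \<Longrightarrow> continuous_on UNIV (\<lambda>s::real. gauss \<sigma> (of_real s - z))"
  unfolding gauss_def by (auto intro!: continuous_intros)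

lemma continuous_on_gauss'_shift:
  "0 < \<sigma> \<Longrightarrow> continuous_on UNIV (\<lambda>s::real. gauss' \<sigma> (of_real s - z))"
  unfolding gauss'_def by (auto intro!: continuous_intros continuous_on_gauss_shift)

text \<open>A bound for \<^const>\<open>gauss''\<close> on the unit disc around \<open>s - z\<close>: halving the decay
  rate of the Gaussian absorbs the shift by at most \<open>1\<close>, and the polynomial factor keeps it
  integrable in \<open>s\<close>.\<close>

definition gauss''_majorant :: "real \<Rightarrow> complex \<Rightarrow> real \<Rightarrow> real" where
  "gauss''_majorant \<sigma> z s = sqrt 2 * exp (((\<bar>Im z\<bar> + 1)\<^sup>2 + 1) / (2 * \<sigma>\<^sup>2)) *
     ((2 * (s - Re z)\<^sup>2 + 2 + (\<bar>Im z\<bar> + 1)\<^sup>2) / \<sigma>\<^sup>2 ^ 2 + 1 / \<sigma>\<^sup>2) *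
     normal_density (Re z) (sqrt 2 * \<sigma>) s"

lemma gauss''_majorant_integrable:
  assumes "0 < \<sigma>"
  shows "gauss''_majorant \<sigma> z integrable_on UNIV"
proof -
  define A where "A = sqrt 2 * exp (((\<bar>Im z\<bar> + 1)\<^sup>2 + 1) / (2 * \<sigma>\<^sup>2))"
  define c1 where "c1 = A * (2 / \<sigma>\<^sup>2 ^ 2)"
  define c2 where "c2 = A * ((2 + (\<bar>Im z\<bar> + 1)\<^sup>2) / \<sigma>\<^sup>2 ^ 2 + 1 / \<sigma>\<^sup>2)"
  have \<sigma>': "0 < sqrt 2 * \<sigma>" using assms by simp
  have "gauss''_majorant \<sigma> z = (\<lambda>s. c1 * (normal_density (Re z) (sqrt 2 * \<sigma>) s * (s - Re z)\<^sup>2) +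
      c2 * normal_density (Re z) (sqrt 2 * \<sigma>) s)"
    using assms by (intro ext) (simp add: gauss''_majorant_def A_def c1_def c2_def field_simps)
  then show ?thesis
    using normal_density_has_integral_UNIV[OF \<sigma>'] normal_density_second_moment_integrable_UNIV[OF \<sigma>']
    by (auto intro!: integrable_add integrable_on_mult_right)
qed

lemma norm_gauss_near_shift_le:
  assumes \<sigma>: "0 < \<sigma>" and \<zeta>: "\<zeta> \<in> cball (of_real s - z) 1"
  shows "cmod (gauss \<sigma> \<zeta>) \<le>
    exp (((\<bar>Im z\<bar> + 1)\<^sup>2 + 1) / (2 * \<sigma>\<^sup>2)) * (sqrt 2 * normal_density (Re z) (sqrt 2 * \<sigma>) s)"
proof -
  define a where "a = s - Re z"
  have d: "cmod (\<zeta> - (of_real s - z)) \<le> 1"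
    using \<zeta> by (simp add: dist_norm norm_minus_commute)
  have "\<bar>Re \<zeta> - a\<bar> \<le> 1"
    using abs_Re_le_cmod[of "\<zeta> - (of_real s - z)"] d by (simp add: a_def)
  then have "(Re \<zeta> - a)\<^sup>2 \<le> 1" by (simp add: abs_le_square_iff[of _ 1, simplified])
  moreover have "0 \<le> (2 * Re \<zeta> - a)\<^sup>2" by simp
  ultimately have re: "a\<^sup>2 / 2 - 1 \<le> (Re \<zeta>)\<^sup>2"
    by (simp add: power2_eq_square algebra_simps)
  have "\<bar>Im \<zeta>\<bar> \<le> \<bar>Im z\<bar> + 1"
    using abs_Im_le_cmod[of "\<zeta> - (of_real s - z)"] d by simp
  then have im: "(Im \<zeta>)\<^sup>2 \<le> (\<bar>Im z\<bar> + 1)\<^sup>2"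
    using abs_le_square_iff[of "Im \<zeta>" "\<bar>Im z\<bar> + 1"] by (simp add: abs_of_nonneg)
  have "(Im \<zeta>)\<^sup>2 - (Re \<zeta>)\<^sup>2 \<le> (\<bar>Im z\<bar> + 1)\<^sup>2 + 1 - a\<^sup>2 / 2"
    using re im by simp
  then have "((Im \<zeta>)\<^sup>2 - (Re \<zeta>)\<^sup>2) / (2 * \<sigma>\<^sup>2) \<le> ((\<bar>Im z\<bar> + 1)\<^sup>2 + 1 - a\<^sup>2 / 2) / (2 * \<sigma>\<^sup>2)"
    using \<sigma> by (intro divide_right_mono) auto
  also have "\<dots> = ((\<bar>Im z\<bar> + 1)\<^sup>2 + 1) / (2 * \<sigma>\<^sup>2) + (- a\<^sup>2 / (4 * \<sigma>\<^sup>2))"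
    using \<sigma> by (simp add: field_simps)
  finally have exp_bound: "((Im \<zeta>)\<^sup>2 - (Re \<zeta>)\<^sup>2) / (2 * \<sigma>\<^sup>2) \<le>
      ((\<bar>Im z\<bar> + 1)\<^sup>2 + 1) / (2 * \<sigma>\<^sup>2) + (- a\<^sup>2 / (4 * \<sigma>\<^sup>2))" .
  have nd: "1 / sqrt (2 * pi * \<sigma>\<^sup>2) * exp (- a\<^sup>2 / (4 * \<sigma>\<^sup>2)) =
      sqrt 2 * normal_density (Re z) (sqrt 2 * \<sigma>) s"
  proof -
    have "sqrt (2 * pi * (sqrt 2 * \<sigma>)\<^sup>2) = sqrt 2 * sqrt (2 * pi * \<sigma>\<^sup>2)"
      by (simp add: power_mult_distrib real_sqrt_mult[symmetric] mult_ac)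
    moreover have "(s - Re z)\<^sup>2 / (2 * (sqrt 2 * \<sigma>)\<^sup>2) = a\<^sup>2 / (4 * \<sigma>\<^sup>2)"
      by (simp add: a_def power_mult_distrib)
    ultimately show ?thesis
      unfolding normal_density_def by (simp add: field_simps) (simp add: a_def)
  qed
  have "cmod (gauss \<sigma> \<zeta>) \<le> 1 / sqrt (2 * pi * \<sigma>\<^sup>2) *
      (exp (((\<bar>Im z\<bar> + 1)\<^sup>2 + 1) / (2 * \<sigma>\<^sup>2)) * exp (- a\<^sup>2 / (4 * \<sigma>\<^sup>2)))"
    unfolding norm_gauss exp_add[symmetric] using exp_bound by (intro mult_left_mono) auto
  also have "\<dots> = exp (((\<bar>Im z\<bar> + 1)\<^sup>2 + 1) / (2 * \<sigma>\<^sup>2)) * (sqrt 2 * normal_density (Re z) (sqrt 2 * \<sigma>) s)"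
    by (metis nd mult.left_commute)
  finally show ?thesis .
qed

lemma norm_gauss''_near_shift_le:
  assumes \<sigma>: "0 < \<sigma>" and \<zeta>: "\<zeta> \<in> cball (of_real s - z) 1"
  shows "cmod (gauss'' \<sigma> \<zeta>) \<le> gauss''_majorant \<sigma> z s"
proof -
  define a where "a = s - Re z"
  have d: "cmod (\<zeta> - (of_real s - z)) \<le> 1"
    using \<zeta> by (simp add: dist_norm norm_minus_commute)
  have "\<bar>Re \<zeta> - a\<bar> \<le> 1"
    using abs_Re_le_cmod[of "\<zeta> - (of_real s - z)"] d by (simp add: a_def)
  then have "(Re \<zeta> - a)\<^sup>2 \<le> 1" by (simp add: abs_le_square_iff[of _ 1, simplified])
  moreover have "0 \<le> (Re \<zeta> - 2 * a)\<^sup>2" by simp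
  ultimately have re: "(Re \<zeta>)\<^sup>2 \<le> 2 * a\<^sup>2 + 2"
    by (simp add: power2_eq_square algebra_simps)
  have "\<bar>Im \<zeta>\<bar> \<le> \<bar>Im z\<bar> + 1"
    using abs_Im_le_cmod[of "\<zeta> - (of_real s - z)"] d by simp
  then have im: "(Im \<zeta>)\<^sup>2 \<le> (\<bar>Im z\<bar> + 1)\<^sup>2"
    using abs_le_square_iff[of "Im \<zeta>" "\<bar>Im z\<bar> + 1"] by (simp add: abs_of_nonneg)
  have "cmod (\<zeta>\<^sup>2 / (of_real (\<sigma>\<^sup>2))\<^sup>2 - 1 / of_real (\<sigma>\<^sup>2)) \<le> (cmod \<zeta>)\<^sup>2 / \<sigma>\<^sup>2 ^ 2 + 1 / \<sigma>\<^sup>2"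
    using norm_triangle_ineq4[of "\<zeta>\<^sup>2 / (of_real (\<sigma>\<^sup>2))\<^sup>2" "1 / of_real (\<sigma>\<^sup>2)"]
    by (simp add: norm_divide norm_power)
  also have "(cmod \<zeta>)\<^sup>2 = (Re \<zeta>)\<^sup>2 + (Im \<zeta>)\<^sup>2" by (simp add: cmod_power2)
  also have "((Re \<zeta>)\<^sup>2 + (Im \<zeta>)\<^sup>2) / \<sigma>\<^sup>2 ^ 2 \<le> (2 * a\<^sup>2 + 2 + (\<bar>Im z\<bar> + 1)\<^sup>2) / \<sigma>\<^sup>2 ^ 2"
    using re im by (intro divide_right_mono) auto
  finally have "cmod (gauss'' \<sigma> \<zeta>) \<le> ((2 * a\<^sup>2 + 2 + (\<bar>Im z\<bar> + 1)\<^sup>2) / \<sigma>\<^sup>2 ^ 2 + 1 / \<sigma>\<^sup>2) *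
      (exp (((\<bar>Im z\<bar> + 1)\<^sup>2 + 1) / (2 * \<sigma>\<^sup>2)) * (sqrt 2 * normal_density (Re z) (sqrt 2 * \<sigma>) s))"
    unfolding gauss''_def norm_mult
    by (intro mult_mono norm_gauss_near_shift_le[OF assms]) auto
  then show ?thesis
    by (simp add: gauss''_majorant_def a_def mult_ac)
qed

lemma norm_gauss_taylor_le:
  assumes \<sigma>: "0 < \<sigma>" and h: "cmod h \<le> 1"
  shows "cmod (gauss \<sigma> (of_real s - z - h) - gauss \<sigma> (of_real s - z) + gauss' \<sigma> (of_real s - z) * h)
    \<le> gauss''_majorant \<sigma> z s * (cmod h)\<^sup>2"
proof -
  define p where "p = of_real s - z"
  define f where "f i = (if i = 0 then gauss \<sigma> else if i = 1 then gauss' \<sigma> else gauss'' \<sigma>)" for i :: nat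
  have "cmod (f 0 (p - h) - (\<Sum>i\<le>1. f i p * ((p - h) - p) ^ i / fact i))
      \<le> gauss''_majorant \<sigma> z s * cmod ((p - h) - p) ^ Suc 1 / fact 1"
  proof (rule complex_Taylor[of "cball p 1"])
    show "(f i has_field_derivative f (Suc i) x) (at x within cball p 1)" if "i \<le> 1" for i x
      using that \<sigma> has_field_derivative_gauss has_field_derivative_gauss'
      by (auto simp: f_def le_Suc_eq intro: has_field_derivative_at_within)
    show "cmod (f (Suc 1) x) \<le> gauss''_majorant \<sigma> z s" if "x \<in> cball p 1" for x
      using norm_gauss''_near_shift_le[OF \<sigma>] that by (simp add: f_def p_def)
  qed (use h in \<open>auto simp: dist_norm\<close>)
  then show ?thesis by (simp add: f_def p_def power2_eq_square algebra_simps)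
qed


definition gauss_remainder :: "real \<Rightarrow> complex \<Rightarrow> complex \<Rightarrow> complex" where
  "gauss_remainder \<sigma> h \<zeta> = (gauss \<sigma> (\<zeta> - h) - gauss \<sigma> \<zeta> + gauss' \<sigma> \<zeta> * h) / h"

lemma norm_gauss_remainder_le:
  assumes "0 < \<sigma>" "h \<noteq> 0" "cmod h \<le> 1"
  shows "cmod (gauss_remainder \<sigma> h (of_real s - z)) \<le> cmod h * gauss''_majorant \<sigma> z s"
proof -
  have "cmod (gauss_remainder \<sigma> h (of_real s - z)) \<le> gauss''_majorant \<sigma> z s * (cmod h)\<^sup>2 / cmod h"
    unfolding gauss_remainder_def norm_divide using norm_gauss_taylor_le[OF assms(1,3), of s z] assms(2)
    by (intro divide_right_mono) auto
  also have "\<dots> = cmod h * gauss''_majorant \<sigma> z s"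
    using assms(2) by (simp add: power2_eq_square)
  finally show ?thesis .
qed


section \<open>Gaussian smoothing\<close>

lemma has_integral_shift_UNIV:
  fixes f :: "real \<Rightarrow> 'a::banach"
  assumes "(f has_integral i) UNIV"
  shows "((\<lambda>x. f (x + t)) has_integral i) UNIV"
proof -
  have ball_subset: "ball 0 B \<subseteq> {a..b} \<longleftrightarrow> a \<le> -B \<and> B \<le> b" if "0 < B" for a b B :: real
    using that by (simp add: ball_eq_greaterThanLessThan greaterThanLessThan_subseteq_atLeastAtMost_iff)
  from assms have f_int: "\<And>a b. f integrable_on cbox a b"
    and f_lim: "\<And>e. e > 0 \<Longrightarrow> \<exists>B>0. \<forall>a b. ball 0 B \<subseteq> cbox a b \<longrightarrow> norm (integral (cbox a b) f - i) < e"
    unfolding has_integral_alt'[of f] by auto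
  have shift: "(\<lambda>x. f (x + t)) = f \<circ> ((+) t)" by (auto simp: add.commute)
  show ?thesis
    unfolding has_integral_alt'[of "\<lambda>x. f (x + t)"]
  proof (intro conjI allI impI)
    fix a b :: real
    show "(\<lambda>x. if x \<in> UNIV then f (x + t) else 0) integrable_on cbox a b"
      using integrable_on_shift_cbox[of f t a b] f_int shift by simp
  next
    fix e :: real assume "0 < e"
    then obtain B where B: "0 < B" "\<forall>a b. ball 0 B \<subseteq> cbox a b \<longrightarrow> norm (integral (cbox a b) f - i) < e"
      using f_lim by blast
    show "\<exists>B>0. \<forall>a b. ball 0 B \<subseteq> cbox a b \<longrightarrow>
            norm (integral (cbox a b) (\<lambda>x. if x \<in> UNIV then f (x + t) else 0) - i) < e"
    proof (intro exI[of _ "B + \<bar>t\<bar>"] conjI allI impI)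
      show "0 < B + \<bar>t\<bar>" using B by simp
      fix a b :: real assume "ball 0 (B + \<bar>t\<bar>) \<subseteq> cbox a b"
      then have "ball 0 B \<subseteq> cbox (a + t) (b + t)"
        using ball_subset[of "B + \<bar>t\<bar>" a b] ball_subset[of B "a + t" "b + t"] B by auto
      then have "norm (integral (cbox (a + t) (b + t)) f - i) < e" using B by blast
      moreover have "integral (cbox a b) (\<lambda>x. if x \<in> UNIV then f (x + t) else 0) =
          integral (cbox (a + t) (b + t)) f"
        using integral_shift_cbox_plus[of a b f t] shift by simp
      ultimately show "norm (integral (cbox a b) (\<lambda>x. if x \<in> UNIV then f (x + t) else 0) - i) < e"
        by simp
    qed
  qed
qed

lemma norm_le_local_plus_linear:
  fixes f :: "real \<Rightarrow> 'b::real_normed_vector"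
  assumes global: "\<And>s. norm (f s) \<le> M" and local: "\<And>s. \<bar>s\<bar> \<le> \<eta> \<Longrightarrow> norm (f s) \<le> \<delta>"
    and "0 < \<eta>" "0 \<le> \<delta>"
  shows "norm (f s) \<le> \<delta> + M / \<eta> * \<bar>s\<bar>"
proof -
  have M: "0 \<le> M" using global[of s] norm_ge_zero order_trans by blast
  show ?thesis
  proof (cases "\<bar>s\<bar> \<le> \<eta>")
    case True
    have "0 \<le> M / \<eta> * \<bar>s\<bar>" using M \<open>0 < \<eta>\<close> by simp
    with local[OF True] show ?thesis by linarith
  next
    case False
    then have "M * \<eta> \<le> M * \<bar>s\<bar>" using M by (intro mult_left_mono) auto
    then have "M \<le> M / \<eta> * \<bar>s\<bar>" using \<open>0 < \<eta>\<close> by (simp add: field_simps)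
    with global[of s] \<open>0 \<le> \<delta>\<close> show ?thesis by linarith
  qed
qed

context cstar
begin

lemma integrable_sc_dominated:
  fixes k :: "real \<Rightarrow> complex" and g :: "real \<Rightarrow> 'a"
  assumes k: "continuous_on UNIV k" and g: "continuous_on UNIV g" and G: "G integrable_on UNIV"
    and le: "\<And>s. cmod (k s) * norm (g s) \<le> G s"
  shows "(\<lambda>s. sc (k s) (g s)) integrable_on UNIV"
    and "norm (integral UNIV (\<lambda>s. sc (k s) (g s))) \<le> integral UNIV G"
proof -
  have cont: "continuous_on UNIV (\<lambda>s. sc (k s) (g s))"
    by (rule bounded_bilinear.continuous_on[OF bounded_bilinear_sc k g])
  show int: "(\<lambda>s. sc (k s) (g s)) integrable_on UNIV"
    by (intro integrable_on_all_intervals_UNIV[OF _ _ G] integrable_continuous continuous_on_subset[OF cont])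
      (auto simp: norm_sc le)
  show "norm (integral UNIV (\<lambda>s. sc (k s) (g s))) \<le> integral UNIV G"
    by (rule integral_norm_bound_integral[OF int G]) (simp add: norm_sc le)
qed

definition gauss_smooth :: "real \<Rightarrow> (real \<Rightarrow> 'a) \<Rightarrow> complex \<Rightarrow> 'a" where
  "gauss_smooth \<sigma> g z = integral UNIV (\<lambda>s. sc (gauss \<sigma> (of_real s - z)) (g s))"

lemma gauss_smooth_linear_growth:
  assumes \<sigma>: "0 < \<sigma>" and g: "continuous_on UNIV g" and "0 \<le> c0" "0 \<le> c1"
    and growth: "\<And>s. norm (g s) \<le> c0 + c1 * \<bar>s\<bar>"
  shows "(\<lambda>s. sc (gauss \<sigma> (of_real s - z)) (g s)) integrable_on UNIV"
    and "norm (gauss_smooth \<sigma> g z) \<le>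
      exp ((Im z)\<^sup>2 / (2 * \<sigma>\<^sup>2)) * (c0 + c1 * \<bar>Re z\<bar> + c1 * (\<sigma> * sqrt (2 / pi)))"
proof -
  define E where "E = exp ((Im z)\<^sup>2 / (2 * \<sigma>\<^sup>2))"
  define x where "x = Re z"
  define G where "G s = E * ((c0 + c1 * \<bar>x\<bar>) * normal_density x \<sigma> s + c1 * (normal_density x \<sigma> s * \<bar>s - x\<bar>))" for s
  have "(G has_integral E * ((c0 + c1 * \<bar>x\<bar>) * 1 + c1 * (\<sigma> * sqrt (2 / pi)))) UNIV"
    unfolding G_def[abs_def]
    by (intro has_integral_mult_right has_integral_add normal_density_has_integral_UNIV
        normal_density_abs_moment_has_integral_UNIV \<sigma>)
  then have G: "G integrable_on UNIV" "integral UNIV G = E * (c0 + c1 * \<bar>x\<bar> + c1 * (\<sigma> * sqrt (2 / pi)))"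
    by (auto simp: has_integral_iff)
  have le: "cmod (gauss \<sigma> (of_real s - z)) * norm (g s) \<le> G s" for s
  proof -
    have "c1 * \<bar>s\<bar> \<le> c1 * (\<bar>x\<bar> + \<bar>s - x\<bar>)"
      using \<open>0 \<le> c1\<close> by (intro mult_left_mono) auto
    then have "norm (g s) \<le> c0 + c1 * \<bar>x\<bar> + c1 * \<bar>s - x\<bar>"
      using growth[of s] by (simp add: algebra_simps)
    then have "E * normal_density x \<sigma> s * norm (g s) \<le> E * normal_density x \<sigma> s * (c0 + c1 * \<bar>x\<bar> + c1 * \<bar>s - x\<bar>)"
      by (intro mult_left_mono) (auto simp: E_def)
    then show ?thesis
      unfolding norm_gauss_shift G_def E_def[symmetric] x_def[symmetric] by (simp add: algebra_simps)
  qed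
  note dominated = integrable_sc_dominated[OF continuous_on_gauss_shift[OF \<sigma>] g G(1) le]
  show "(\<lambda>s. sc (gauss \<sigma> (of_real s - z)) (g s)) integrable_on UNIV"
    by (rule dominated(1))
  show "norm (gauss_smooth \<sigma> g z) \<le>
      exp ((Im z)\<^sup>2 / (2 * \<sigma>\<^sup>2)) * (c0 + c1 * \<bar>Re z\<bar> + c1 * (\<sigma> * sqrt (2 / pi)))"
    using dominated(2) G(2) by (simp add: gauss_smooth_def E_def x_def)
qed

lemma integrable_gauss_smooth_bounded:
  assumes "0 < \<sigma>" "continuous_on UNIV g" "\<And>s. norm (g s) \<le> B"
  shows "(\<lambda>s. sc (gauss \<sigma> (of_real s - z)) (g s)) integrable_on UNIV"
proof -
  have "0 \<le> B" using assms(3)[of 0] norm_ge_zero order_trans by blast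
  then show ?thesis
    by (rule gauss_smooth_linear_growth(1)[OF assms(1,2) _ order_refl]) (simp add: assms(3))
qed

lemma gauss_smooth_diff:
  assumes "0 < \<sigma>" "continuous_on UNIV f" "continuous_on UNIV g"
    "\<And>s. norm (f s) \<le> Bf" "\<And>s. norm (g s) \<le> Bg"
  shows "gauss_smooth \<sigma> (\<lambda>s. f s - g s) z = gauss_smooth \<sigma> f z - gauss_smooth \<sigma> g z"
  unfolding gauss_smooth_def
  using integral_diff[OF integrable_gauss_smooth_bounded[OF assms(1,2,4)] integrable_gauss_smooth_bounded[OF assms(1,3,5)]]
  by (simp add: sc_diff_right)

lemma gauss_smooth_one:
  assumes "0 < \<sigma>"
  shows "gauss_smooth \<sigma> (\<lambda>s. 1) 0 = 1"
proof -
  have "((\<lambda>s. normal_density 0 \<sigma> s *\<^sub>R (1::'a)) has_integral 1 *\<^sub>R 1) UNIV"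
    by (rule has_integral_scaleR_left[OF normal_density_has_integral_UNIV[OF assms]])
  then have "integral UNIV (\<lambda>s. normal_density 0 \<sigma> s *\<^sub>R (1::'a)) = 1"
    using integral_unique by simp
  then show ?thesis
    by (simp add: gauss_smooth_def gauss_of_real sc_of_real)
qed

lemma integrable_gauss'_smooth_bounded:
  assumes \<sigma>: "0 < \<sigma>" and g: "continuous_on UNIV g" and bound: "\<And>s. norm (g s) \<le> B"
  shows "(\<lambda>s. sc (gauss' \<sigma> (of_real s - z)) (g s)) integrable_on UNIV"
proof (rule integrable_sc_dominated(1)[OF continuous_on_gauss'_shift[OF \<sigma>] g])
  define E where "E = exp ((Im z)\<^sup>2 / (2 * \<sigma>\<^sup>2))"
  define x where "x = Re z"
  define G where "G s = B * E / \<sigma>\<^sup>2 * (normal_density x \<sigma> s * \<bar>s - x\<bar> + \<bar>Im z\<bar> * normal_density x \<sigma> s)" for s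
  show "G integrable_on UNIV"
    unfolding G_def[abs_def]
    by (intro integrable_on_mult_right integrable_add
        has_integral_integrable[OF normal_density_abs_moment_has_integral_UNIV[OF \<sigma>]]
        has_integral_integrable[OF normal_density_has_integral_UNIV[OF \<sigma>]])
  show "cmod (gauss' \<sigma> (of_real s - z)) * norm (g s) \<le> G s" for s
  proof -
    define p where "p = of_real s - z"
    have "cmod p \<le> \<bar>s - x\<bar> + \<bar>Im z\<bar>" using cmod_le[of p] by (simp add: p_def x_def)
    moreover have "cmod (gauss' \<sigma> p) = cmod p / \<sigma>\<^sup>2 * (E * normal_density x \<sigma> s)"
      unfolding gauss'_def using norm_gauss_shift[of \<sigma> s z]
      by (simp add: norm_mult norm_divide norm_power p_def E_def x_def)
    ultimately have "cmod (gauss' \<sigma> p) \<le> (\<bar>s - x\<bar> + \<bar>Im z\<bar>) / \<sigma>\<^sup>2 * (E * normal_density x \<sigma> s)"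
      by (simp add: E_def divide_right_mono mult_right_mono)
    from mult_mono[OF this bound[of s]]
    have "cmod (gauss' \<sigma> p) * norm (g s) \<le> (\<bar>s - x\<bar> + \<bar>Im z\<bar>) / \<sigma>\<^sup>2 * (E * normal_density x \<sigma> s) * B"
      by (simp add: E_def)
    then show ?thesis by (simp add: G_def p_def algebra_simps add_divide_distrib)
  qed
qed

lemma gauss_smooth_difference_quotient:
  assumes \<sigma>: "0 < \<sigma>" and g: "continuous_on UNIV g" and bound: "\<And>s. norm (g s) \<le> B"
    and h: "h \<noteq> 0"
  shows "(\<lambda>s. sc (gauss_remainder \<sigma> h (of_real s - z)) (g s)) integrable_on UNIV"
    and "sc (inverse h) (gauss_smooth \<sigma> g (z + h) - gauss_smooth \<sigma> g z) =
      integral UNIV (\<lambda>s. sc (gauss_remainder \<sigma> h (of_real s - z)) (g s)) +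
      integral UNIV (\<lambda>s. sc (- gauss' \<sigma> (of_real s - z)) (g s))"
proof -
  define A where "A s = sc (gauss \<sigma> (of_real s - (z + h))) (g s) - sc (gauss \<sigma> (of_real s - z)) (g s)" for s
  note int = integrable_gauss_smooth_bounded[OF \<sigma> g bound]
  have A_int: "(\<lambda>s. sc (inverse h) (A s)) integrable_on UNIV"
    using integrable_linear[OF integrable_diff[OF int int] bounded_linear_sc_right]
    by (simp add: A_def o_def)
  have int': "(\<lambda>s. sc (- gauss' \<sigma> (of_real s - z)) (g s)) integrable_on UNIV"
    using integrable_neg[OF integrable_gauss'_smooth_bounded[OF \<sigma> g bound, of z]]
    by (simp add: sc_minus_left)
  have split: "sc (inverse h) (A s) =
      sc (gauss_remainder \<sigma> h (of_real s - z)) (g s) + sc (- gauss' \<sigma> (of_real s - z)) (g s)" for s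
  proof -
    have "sc (inverse h) (A s) = sc (inverse h * (gauss \<sigma> (of_real s - (z + h)) - gauss \<sigma> (of_real s - z))) (g s)"
      by (simp only: A_def sc_diff_left[symmetric] sc_sc)
    also have "inverse h * (gauss \<sigma> (of_real s - (z + h)) - gauss \<sigma> (of_real s - z)) =
        gauss_remainder \<sigma> h (of_real s - z) + - gauss' \<sigma> (of_real s - z)"
      using h by (simp add: gauss_remainder_def field_simps diff_diff_eq)
    finally show ?thesis by (simp only: sc_add_left)
  qed
  show rem_int: "(\<lambda>s. sc (gauss_remainder \<sigma> h (of_real s - z)) (g s)) integrable_on UNIV"
    using integrable_diff[OF A_int int'] by (simp add: split)
  have "sc (inverse h) (gauss_smooth \<sigma> g (z + h) - gauss_smooth \<sigma> g z) = integral UNIV (\<lambda>s. sc (inverse h) (A s))"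
    unfolding gauss_smooth_def integral_diff[OF int int, symmetric]
    using integral_linear[OF integrable_diff[OF int int] bounded_linear_sc_right] by (simp add: A_def o_def)
  then show "sc (inverse h) (gauss_smooth \<sigma> g (z + h) - gauss_smooth \<sigma> g z) =
      integral UNIV (\<lambda>s. sc (gauss_remainder \<sigma> h (of_real s - z)) (g s)) +
      integral UNIV (\<lambda>s. sc (- gauss' \<sigma> (of_real s - z)) (g s))"
    by (simp only: split integral_add[OF rem_int int'])
qed

lemma norm_gauss_smooth_difference_quotient_le:
  assumes \<sigma>: "0 < \<sigma>" and g: "continuous_on UNIV g" and bound: "\<And>s. norm (g s) \<le> B"
    and h: "h \<noteq> 0" "cmod h \<le> 1"
  shows "norm (sc (inverse h) (gauss_smooth \<sigma> g (z + h) - gauss_smooth \<sigma> g z) -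
      integral UNIV (\<lambda>s. sc (- gauss' \<sigma> (of_real s - z)) (g s)))
    \<le> cmod h * (B * integral UNIV (gauss''_majorant \<sigma> z))"
proof -
  note quotient = gauss_smooth_difference_quotient[OF \<sigma> g bound h(1), of z]
  have le: "norm (sc (gauss_remainder \<sigma> h (of_real s - z)) (g s)) \<le> cmod h * (B * gauss''_majorant \<sigma> z s)" for s
    using norm_gauss_remainder_le[OF \<sigma> h, of s z] bound[of s]
    by (auto simp: norm_sc mult_ac intro: mult_mono order_trans[OF norm_ge_zero])
  have "norm (integral UNIV (\<lambda>s. sc (gauss_remainder \<sigma> h (of_real s - z)) (g s)))
      \<le> integral UNIV (\<lambda>s. cmod h * (B * gauss''_majorant \<sigma> z s))"
    using gauss''_majorant_integrable[OF \<sigma>, of z]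
    by (intro integral_norm_bound_integral[OF quotient(1) _ le] integrable_on_mult_right)
  then show ?thesis
    by (simp add: quotient(2))
qed

lemma entire_gauss_smooth:
  assumes \<sigma>: "0 < \<sigma>" and g: "continuous_on UNIV g" and bound: "\<And>s. norm (g s) \<le> B"
  shows "entire_fun sc (gauss_smooth \<sigma> g)"
  unfolding entire_fun_def
proof
  fix z
  define D where "D = integral UNIV (\<lambda>s. sc (- gauss' \<sigma> (of_real s - z)) (g s))"
  define C where "C = B * integral UNIV (gauss''_majorant \<sigma> z)"
  have "\<forall>\<^sub>F h in at 0. norm (sc (inverse h) (gauss_smooth \<sigma> g (z + h) - gauss_smooth \<sigma> g z) - D) \<le> cmod h * C"
    unfolding eventually_at D_def C_def
    by (intro exI[of _ 1]) (auto simp: dist_norm intro: norm_gauss_smooth_difference_quotient_le[OF \<sigma> g bound])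
  moreover have "((\<lambda>h::complex. cmod h) \<longlongrightarrow> 0) (at 0)"
    using tendsto_norm_zero[OF tendsto_ident_at[of 0 UNIV]] by simp
  then have "((\<lambda>h::complex. cmod h * C) \<longlongrightarrow> 0) (at 0)"
    by (rule tendsto_mult_left_zero)
  ultimately have "((\<lambda>h. sc (inverse h) (gauss_smooth \<sigma> g (z + h) - gauss_smooth \<sigma> g z) - D) \<longlongrightarrow> 0) (at 0)"
    by (rule Lim_null_comparison)
  then show "\<exists>D. ((\<lambda>h. sc (inverse h) (gauss_smooth \<sigma> g (z + h) - gauss_smooth \<sigma> g z)) \<longlongrightarrow> D) (at 0)"
    by (auto simp: LIM_zero_iff)
qed

end


section \<open>Smoothing of cocycles\<close>

lemma uniform_limit_equicontinuous_at_0: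
  fixes u :: "nat \<Rightarrow> real \<Rightarrow> 'b::metric_space"
  assumes lim: "uniform_limit {-1..1} u u_inf sequentially"
    and cont: "\<And>n. isCont (u n) 0" "isCont u_inf 0" and \<delta>: "0 < \<delta>"
  obtains \<eta> where "0 < \<eta>" "\<And>s. \<bar>s\<bar> \<le> \<eta> \<Longrightarrow> dist (u_inf s) (u_inf 0) < \<delta>"
    "\<And>n s. \<bar>s\<bar> \<le> \<eta> \<Longrightarrow> dist (u n s) (u n 0) < \<delta>"
proof -
  have "\<forall>\<^sub>F n in sequentially. \<forall>s\<in>{-1..1}. dist (u n s) (u_inf s) < \<delta> / 3"
    by (rule uniform_limitD[OF lim]) (use \<delta> in simp)
  then obtain N where N: "\<And>n s. N \<le> n \<Longrightarrow> s \<in> {-1..1} \<Longrightarrow> dist (u n s) (u_inf s) < \<delta> / 3"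
    unfolding eventually_sequentially by blast
  have "(u_inf \<longlongrightarrow> u_inf 0) (nhds 0)"
    using cont(2) by (simp add: isCont_def tendsto_at_iff_tendsto_nhds)
  then have "\<forall>\<^sub>F s in nhds 0. dist (u_inf s) (u_inf 0) < \<delta> / 3"
    by (rule tendstoD) (use \<delta> in simp)
  moreover have "(u n \<longlongrightarrow> u n 0) (nhds 0)" for n
    using cont(1)[of n] by (simp add: isCont_def tendsto_at_iff_tendsto_nhds)
  then have "\<forall>\<^sub>F s in nhds 0. dist (u n s) (u n 0) < \<delta>" for n
    using \<delta> by (rule tendstoD)
  then have "\<forall>\<^sub>F s in nhds 0. \<forall>n\<in>{..<N}. dist (u n s) (u n 0) < \<delta>"
    by (intro eventually_ball_finite) auto
  moreover have "\<forall>\<^sub>F s in nhds 0. s \<in> {-1..1::real}"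
    unfolding eventually_nhds_metric by (intro exI[of _ 1]) (auto simp: dist_real_def)
  ultimately have "\<forall>\<^sub>F s in nhds 0. dist (u_inf s) (u_inf 0) < \<delta> \<and> (\<forall>n. dist (u n s) (u n 0) < \<delta>)"
  proof eventually_elim
    case (elim s)
    have large: "dist (u n s) (u n 0) < \<delta>" if "N \<le> n" for n
    proof -
      have "dist (u n s) (u n 0) \<le> dist (u n s) (u_inf s) + dist (u_inf s) (u_inf 0) + dist (u n 0) (u_inf 0)"
        using dist_triangle[of "u n s" "u n 0" "u_inf s"] dist_triangle[of "u_inf s" "u n 0" "u_inf 0"]
        by (simp add: dist_commute)
      moreover have "dist (u n s) (u_inf s) < \<delta> / 3" "dist (u n 0) (u_inf 0) < \<delta> / 3"
        using N[OF that] elim by auto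
      ultimately show ?thesis using elim by linarith
    qed
    then have "dist (u n s) (u n 0) < \<delta>" for n
      using elim(2) by (cases "N \<le> n") auto
    moreover have "dist (u_inf s) (u_inf 0) < \<delta>"
      using elim(1) \<delta> by linarith
    ultimately show ?case by blast
  qed
  then obtain d where "0 < d" "\<And>s. dist s 0 < d \<Longrightarrow> dist (u_inf s) (u_inf 0) < \<delta> \<and> (\<forall>n. dist (u n s) (u n 0) < \<delta>)"
    unfolding eventually_nhds_metric by blast
  then show ?thesis by (intro that[of "d / 2"]) (auto simp: dist_real_def)
qed

lemma cocycle_at_0:
  assumes "cocycle st \<alpha> v" "\<alpha> 0 = id"
  shows "v 0 = 1"
proof -
  have "v 0 * v 0 = v 0" using assms unfolding cocycle_def by (metis add_0 id_apply)
  then have "st (v 0) * v 0 * v 0 = st (v 0) * v 0" by (simp add: mult.assoc)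
  then show ?thesis using assms(1) unfolding cocycle_def unitary_def by simp
qed

context cstar
begin

lemma entire_fun_mult_left:
  assumes "entire_fun sc f"
  shows "entire_fun sc (\<lambda>z. c * f z)"
  unfolding entire_fun_def
proof
  fix z
  obtain D where "((\<lambda>h. sc (inverse h) (f (z + h) - f z)) \<longlongrightarrow> D) (at 0)"
    using assms unfolding entire_fun_def by blast
  then have "((\<lambda>h. c * sc (inverse h) (f (z + h) - f z)) \<longlongrightarrow> c * D) (at 0)"
    by (rule tendsto_mult_left)
  moreover have "c * sc (inverse h) (f (z + h) - f z) = sc (inverse h) (c * f (z + h) - c * f z)" for h
    by (simp add: sc_mult_right right_diff_distrib[symmetric])
  ultimately show "\<exists>D. ((\<lambda>h. sc (inverse h) (c * f (z + h) - c * f z)) \<longlongrightarrow> D) (at 0)"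
    by auto
qed

text \<open>Substituting \<open>s + t\<close> for \<open>s\<close> turns the cocycle identity into a translation of the kernel.\<close>

lemma gauss_smooth_cocycle:
  assumes \<sigma>: "0 < \<sigma>" and A: "bounded_linear A" and A_sc: "\<And>c x. A (sc c x) = sc c (A x)"
    and cocycle: "\<And>s. v t * A (v s) = v (t + s)"
    and v: "continuous_on UNIV v" and bound: "\<And>s. norm (v s) \<le> 1"
  shows "v t * A (gauss_smooth \<sigma> v 0) = gauss_smooth \<sigma> v (of_real t)"
proof -
  note int0 = integrable_gauss_smooth_bounded[OF \<sigma> v bound, of 0]
  have "A (gauss_smooth \<sigma> v 0) = integral UNIV (\<lambda>s. sc (gauss \<sigma> (of_real s)) (A (v s)))"
    unfolding gauss_smooth_def using integral_linear[OF int0 A] by (simp add: o_def A_sc)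
  moreover have "(\<lambda>s. sc (gauss \<sigma> (of_real s)) (A (v s))) integrable_on UNIV"
    using integrable_linear[OF int0 A] by (simp add: o_def A_sc)
  note integral_linear[OF this bounded_linear_mult_right[of "v t"]]
  ultimately have "v t * A (gauss_smooth \<sigma> v 0) = integral UNIV (\<lambda>s. v t * sc (gauss \<sigma> (of_real s)) (A (v s)))"
    by (simp add: o_def)
  also have "\<dots> = integral UNIV (\<lambda>s. sc (gauss \<sigma> (of_real s)) (v (s + t)))"
    by (simp add: sc_mult_right[symmetric] cocycle add.commute)
  also have "\<dots> = gauss_smooth \<sigma> v (of_real t)"
  proof -
    have "((\<lambda>s. sc (gauss \<sigma> (of_real s - of_real t)) (v s)) has_integral gauss_smooth \<sigma> v (of_real t)) UNIV"
      using integrable_gauss_smooth_bounded[OF \<sigma> v bound]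
      by (simp add: gauss_smooth_def has_integral_integrable_integral)
    from has_integral_shift_UNIV[OF this, of t] show ?thesis
      by (simp add: integral_unique)
  qed
  finally show ?thesis .
qed

lemma norm_gauss_smooth_minus_one_le:
  assumes \<sigma>: "0 < \<sigma>" and v: "continuous_on UNIV v" and bound: "\<And>s. norm (v s) \<le> 1"
    and \<eta>: "0 < \<eta>" and \<delta>: "0 \<le> \<delta>" and near: "\<And>s. \<bar>s\<bar> \<le> \<eta> \<Longrightarrow> norm (v s - 1) \<le> \<delta>"
  shows "norm (gauss_smooth \<sigma> v 0 - 1) \<le> \<delta> + 2 * \<sigma> / \<eta>"
proof -
  have "norm (v s - 1) \<le> 2" for s
    using norm_triangle_ineq4[of "v s" 1] bound[of s] by simp
  then have growth: "norm (v s - 1) \<le> \<delta> + 2 / \<eta> * \<bar>s\<bar>" for s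
    by (rule norm_le_local_plus_linear[OF _ near \<eta> \<delta>])
  have "gauss_smooth \<sigma> v 0 - 1 = gauss_smooth \<sigma> (\<lambda>s. v s - 1) 0"
    using gauss_smooth_diff[where Bf = 1 and Bg = 1 and g = "\<lambda>s. 1"] gauss_smooth_one
    by (simp add: \<sigma> v bound)
  also have "norm \<dots> \<le> exp ((Im 0)\<^sup>2 / (2 * \<sigma>\<^sup>2)) * (\<delta> + 2 / \<eta> * \<bar>Re 0\<bar> + 2 / \<eta> * (\<sigma> * sqrt (2 / pi)))"
    using \<eta> \<delta> by (intro gauss_smooth_linear_growth(2)[OF \<sigma> _ _ _ growth] continuous_intros v) auto
  also have "\<dots> = \<delta> + 2 / \<eta> * (\<sigma> * sqrt (2 / pi))"
    by simp
  also have "\<dots> \<le> \<delta> + 2 / \<eta> * (\<sigma> * 1)"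
    using \<eta> \<sigma> pi_gt3 by (intro add_left_mono mult_left_mono) auto
  finally show ?thesis by simp
qed

lemma gauss_smooth_tendsto:
  assumes \<sigma>: "0 < \<sigma>" and lim: "\<And>K. compact K \<Longrightarrow> uniform_limit K u u_inf sequentially"
    and u: "\<And>n. continuous_on UNIV (u n)" "\<And>n s. norm (u n s) \<le> 1"
    and u_inf: "continuous_on UNIV u_inf" "\<And>s. norm (u_inf s) \<le> 1"
  shows "(\<lambda>n. gauss_smooth \<sigma> (u n) z) \<longlonglongrightarrow> gauss_smooth \<sigma> u_inf z"
proof (rule LIMSEQ_I)
  fix r :: real assume r: "0 < r"
  define E where "E = exp ((Im z)\<^sup>2 / (2 * \<sigma>\<^sup>2))"
  define T where "T = \<bar>Re z\<bar> + \<sigma> * sqrt (2 / pi)"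
  define R where "R = 4 * E * (T + 1) / r"
  define \<delta> where "\<delta> = r / (4 * E)"
  have E: "0 < E" and T: "0 \<le> T" using \<sigma> by (simp_all add: E_def T_def)
  then have R: "0 < R" and \<delta>: "0 < \<delta>" using r by (simp_all add: R_def \<delta>_def)
  obtain M where M: "\<And>n s. M \<le> n \<Longrightarrow> s \<in> {-R..R} \<Longrightarrow> dist (u n s) (u_inf s) < \<delta>"
    using uniform_limitD[OF lim[OF compact_Icc] \<delta>] unfolding eventually_sequentially by blast
  show "\<exists>M. \<forall>n\<ge>M. norm (gauss_smooth \<sigma> (u n) z - gauss_smooth \<sigma> u_inf z) < r"
  proof (intro exI allI impI)
    fix n assume n: "M \<le> n"
    have "norm (u n s - u_inf s) \<le> 2" for s
      using norm_triangle_ineq4[of "u n s" "u_inf s"] u(2)[of n s] u_inf(2)[of s] by simp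
    moreover have "norm (u n s - u_inf s) \<le> \<delta>" if "\<bar>s\<bar> \<le> R" for s
      using M[OF n, of s] that by (simp add: dist_norm abs_le_iff)
    ultimately have growth: "norm (u n s - u_inf s) \<le> \<delta> + 2 / R * \<bar>s\<bar>" for s
      using R \<delta> by (intro norm_le_local_plus_linear) auto
    have "gauss_smooth \<sigma> (u n) z - gauss_smooth \<sigma> u_inf z = gauss_smooth \<sigma> (\<lambda>s. u n s - u_inf s) z"
      by (rule gauss_smooth_diff[where Bf = 1 and Bg = 1, symmetric]) (simp_all add: \<sigma> u u_inf)
    also have "norm \<dots> \<le> E * (\<delta> + 2 / R * \<bar>Re z\<bar> + 2 / R * (\<sigma> * sqrt (2 / pi)))"
      unfolding E_def using \<delta> R
      by (intro gauss_smooth_linear_growth(2)[OF \<sigma> _ _ _ growth] continuous_intros u u_inf) auto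
    also have "\<dots> = E * \<delta> + E * (2 / R) * T"
      using R by (simp add: T_def field_simps)
    also have "\<dots> < r / 4 + r / 2"
    proof -
      have "r / 2 * R = 2 * E * (T + 1)" using r by (simp add: R_def)
      then have "2 * E * T / R < r / 2" using E R by (simp add: pos_divide_less_eq)
      moreover have "E * \<delta> = r / 4" using E by (simp add: \<delta>_def)
      ultimately show ?thesis by simp
    qed
    also have "\<dots> < r"
      using r by simp
    finally show "norm (gauss_smooth \<sigma> (u n) z - gauss_smooth \<sigma> u_inf z) < r" .
  qed
qed

lemma cocycle_continuous_bounded:
  assumes "cocycle st \<alpha> v"
  shows "continuous_on UNIV v" "\<And>t. norm (v t) \<le> 1"
  using assms unfolding cocycle_def by (auto simp: norm_unitary)

lemma gauss_smoothed_cocycles_near_one: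
  assumes \<alpha>: "\<alpha> 0 = id" and coc: "cocycle st \<alpha> u_inf" "\<And>n. cocycle st \<alpha> (u n)"
    and lim: "\<And>K. compact K \<Longrightarrow> uniform_limit K u u_inf sequentially" and e: "0 < e"
  obtains \<sigma> where "0 < \<sigma>" "norm (gauss_smooth \<sigma> u_inf 0 - 1) < e"
    "\<And>n. norm (gauss_smooth \<sigma> (u n) 0 - 1) < e"
proof -
  note cont = cocycle_continuous_bounded(1)[OF coc(1)] cocycle_continuous_bounded(1)[OF coc(2)]
  note bound = cocycle_continuous_bounded(2)[OF coc(1)] cocycle_continuous_bounded(2)[OF coc(2)]
  have "\<And>n. isCont (u n) 0" "isCont u_inf 0"
    using cont by (simp_all add: continuous_on_eq_continuous_at)
  then obtain \<eta> where "0 < \<eta>" "\<And>s. \<bar>s\<bar> \<le> \<eta> \<Longrightarrow> dist (u_inf s) (u_inf 0) < e / 4"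
    "\<And>n s. \<bar>s\<bar> \<le> \<eta> \<Longrightarrow> dist (u n s) (u n 0) < e / 4"
    by (rule uniform_limit_equicontinuous_at_0[OF lim[OF compact_Icc], where \<delta> = "e / 4"]) (use e in auto)
  moreover have "u_inf 0 = 1" "\<And>n. u n 0 = 1"
    using cocycle_at_0[OF coc(1) \<alpha>] cocycle_at_0[OF coc(2) \<alpha>] by auto
  ultimately have \<eta>: "0 < \<eta>" "\<And>s. \<bar>s\<bar> \<le> \<eta> \<Longrightarrow> norm (u_inf s - 1) \<le> e / 4"
    "\<And>n s. \<bar>s\<bar> \<le> \<eta> \<Longrightarrow> norm (u n s - 1) \<le> e / 4"
    by (auto simp: dist_norm less_imp_le)
  define \<sigma> where "\<sigma> = e * \<eta> / 8"
  have \<sigma>: "0 < \<sigma>" using e \<eta> by (simp add: \<sigma>_def)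
  have "norm (gauss_smooth \<sigma> u_inf 0 - 1) \<le> e / 4 + 2 * \<sigma> / \<eta>"
    "norm (gauss_smooth \<sigma> (u n) 0 - 1) \<le> e / 4 + 2 * \<sigma> / \<eta>" for n
    using e \<eta> by (intro norm_gauss_smooth_minus_one_le[OF \<sigma>] cont bound; simp)+
  moreover have "e / 4 + 2 * \<sigma> / \<eta> < e"
    using e \<eta> by (simp add: \<sigma>_def)
  ultimately have "norm (gauss_smooth \<sigma> u_inf 0 - 1) < e" "norm (gauss_smooth \<sigma> (u n) 0 - 1) < e" for n
    by (auto intro: le_less_trans)
  then show ?thesis
    using that[OF \<sigma>] by blast
qed

lemma smoothed_cocycle:
  assumes \<alpha>: "flow sc st \<alpha>" and v: "cocycle st \<alpha> v" and \<sigma>: "0 < \<sigma>"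
    and near: "norm (gauss_smooth \<sigma> v 0 - 1) < 1"
  defines "w \<equiv> gauss_smooth \<sigma> v 0"
  shows "w * neumann_inverse w = 1" "neumann_inverse w * w = 1"
    and "entire_fun sc (\<lambda>z. neumann_inverse w * gauss_smooth \<sigma> v z)"
    and "neumann_inverse w * gauss_smooth \<sigma> v (of_real t) = neumann_inverse w * v t * \<alpha> t w"
proof -
  note cont = cocycle_continuous_bounded(1)[OF v] and bound = cocycle_continuous_bounded(2)[OF v]
  have "norm (1 - w) < 1" using near by (simp add: w_def norm_minus_commute)
  then show "w * neumann_inverse w = 1" "neumann_inverse w * w = 1"
    by (simp_all add: neumann_inverse)
  show "entire_fun sc (\<lambda>z. neumann_inverse w * gauss_smooth \<sigma> v z)"
    by (intro entire_fun_mult_left entire_gauss_smooth[OF \<sigma> cont bound])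
  have "star_automorphism sc st (\<alpha> t)" using \<alpha> by (simp add: flow_def)
  then have "v t * \<alpha> t w = gauss_smooth \<sigma> v (of_real t)"
    unfolding w_def using v
    by (intro gauss_smooth_cocycle[OF \<sigma> _ _ _ cont bound] bounded_linear_unital_star_hom
        unital_star_hom_star_automorphism) (auto simp: star_automorphism_def cocycle_def)
  then show "neumann_inverse w * gauss_smooth \<sigma> v (of_real t) = neumann_inverse w * v t * \<alpha> t w"
    by (simp add: mult.assoc)
qed

end

theorem lemma2p2:
  fixes sc :: "complex \<Rightarrow> 'a::{real_normed_algebra_1,banach} \<Rightarrow> 'a"
    and st :: "'a \<Rightarrow> 'a"
    and \<alpha> :: "real \<Rightarrow> 'a \<Rightarrow> 'a"
    and u_inf :: "real \<Rightarrow> 'a"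
    and u :: "nat \<Rightarrow> real \<Rightarrow> 'a"
    and \<epsilon> :: real
  assumes "simple_cstar sc st"
    and "flow sc st \<alpha>"
    and "cocycle st \<alpha> u_inf"
    and "\<And>n. cocycle st \<alpha> (u n)"
    and "\<And>K. compact K \<Longrightarrow> uniform_limit K u u_inf sequentially"
    and "\<epsilon> > 0"
  shows "\<exists>w_inf wi_inf (w :: nat \<Rightarrow> 'a) (wi :: nat \<Rightarrow> 'a) V_inf (V :: nat \<Rightarrow> complex \<Rightarrow> 'a).
     w_inf * wi_inf = 1 \<and> wi_inf * w_inf = 1 \<and>
     (\<forall>n. w n * wi n = 1 \<and> wi n * w n = 1) \<and>
     w \<longlonglongrightarrow> w_inf \<and>
     norm (w_inf - 1) < \<epsilon> \<and> (\<forall>n. norm (w n - 1) < \<epsilon>) \<and>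
     entire_fun sc V_inf \<and> (\<forall>n. entire_fun sc (V n)) \<and>
     (\<forall>t::real. V_inf (complex_of_real t) = wi_inf * u_inf t * \<alpha> t w_inf) \<and>
     (\<forall>n. \<forall>t::real. V n (complex_of_real t) = wi n * u n t * \<alpha> t (w n)) \<and>
     (\<forall>z. (\<lambda>n. V n z) \<longlonglongrightarrow> V_inf z)"
proof -
  interpret cstar sc st
    using assms(1) by unfold_locales (simp add: simple_cstar_def)
  have "\<alpha> 0 = id" using assms(2) by (simp add: flow_def)
  then obtain \<sigma> where \<sigma>: "0 < \<sigma>" and small: "norm (gauss_smooth \<sigma> u_inf 0 - 1) < min \<epsilon> 1"
    "\<And>n. norm (gauss_smooth \<sigma> (u n) 0 - 1) < min \<epsilon> 1"
    by (rule gauss_smoothed_cocycles_near_one[OF _ assms(3-5), where e = "min \<epsilon> 1"]) (use assms(6) in auto)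
  define w_inf where "w_inf = gauss_smooth \<sigma> u_inf 0"
  define w where "w n = gauss_smooth \<sigma> (u n) 0" for n
  have near_inf: "norm (w_inf - 1) < \<epsilon>" "norm (w_inf - 1) < 1"
    and near: "norm (w n - 1) < \<epsilon>" "norm (w n - 1) < 1" for n
    using small by (simp_all add: w_inf_def w_def)
  note smooth_inf = smoothed_cocycle[OF assms(2,3) \<sigma>, folded w_inf_def, OF near_inf(2)]
  note smooth = smoothed_cocycle[OF assms(2,4) \<sigma>, folded w_def, OF near(2)]
  note tendsto = gauss_smooth_tendsto[OF \<sigma> assms(5) cocycle_continuous_bounded[OF assms(4)]
      cocycle_continuous_bounded[OF assms(3)]]
  have w_lim: "w \<longlonglongrightarrow> w_inf" using tendsto by (simp add: w_def[abs_def] w_inf_def)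
  show ?thesis
  proof (intro exI conjI allI)
    show "w_inf * neumann_inverse w_inf = 1" "neumann_inverse w_inf * w_inf = 1"
      "entire_fun sc (\<lambda>z. neumann_inverse w_inf * gauss_smooth \<sigma> u_inf z)"
      "neumann_inverse w_inf * gauss_smooth \<sigma> u_inf (of_real t) = neumann_inverse w_inf * u_inf t * \<alpha> t w_inf"
      for t by (rule smooth_inf)+
    show "w n * neumann_inverse (w n) = 1" "neumann_inverse (w n) * w n = 1"
      "entire_fun sc (\<lambda>z. neumann_inverse (w n) * gauss_smooth \<sigma> (u n) z)"
      "neumann_inverse (w n) * gauss_smooth \<sigma> (u n) (of_real t) = neumann_inverse (w n) * u n t * \<alpha> t (w n)"
      for n t by (rule smooth)+
    show "(\<lambda>n. neumann_inverse (w n) * gauss_smooth \<sigma> (u n) z) \<longlonglongrightarrow> neumann_inverse w_inf * gauss_smooth \<sigma> u_inf z"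
      for z using near_inf(2)
      by (intro tendsto_mult tendsto tendsto_neumann_inverse[OF w_lim]) (simp add: norm_minus_commute)
  qed (fact w_lim near_inf(1) near(1))+
qed

end
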